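(* Let $f : \{0,1\}^n \to \{0,1\}$ be a degree-1 threshold function, i.e. there are integers $a_1,\dots,a_n,b$ (of arbitrary magnitude) such that $f(x)=1$ if and only if $a_1x_1+\cdots+a_nx_n \le b$. Then for any partition of the variables $\{x_1,\dots,x_n\}$ into two parts $P_1,P_2$, where Alice sees the values of the variables in $P_1$ and Bob sees the values of the variables in $P_2$, $f$ can be computed by a public-coin randomized communication protocol with error probability $O(1/n)$ on every input and communication $O(\log n)$ bits (the constants in the $O(\cdot)$ being absolute, independent of $f$ and of the partition).
   Context: Randomized protocols are in the public-coin model: both players see all random coin flips. The error probability of the protocol on an input is the probability over the coins that it outputs a value different from $f$ of that input. *)

theory Defs
  imports "HOL-Probability.Probability"
begin

datatype ('x, 'y) protocol =
    Leaf bool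
  | AliceNode "'x \<Rightarrow> bool" "('x, 'y) protocol" "('x, 'y) protocol"
  | BobNode "'y \<Rightarrow> bool" "('x, 'y) protocol" "('x, 'y) protocol"

fun run_protocol :: "('x, 'y) protocol \<Rightarrow> 'x \<Rightarrow> 'y \<Rightarrow> bool" where
  "run_protocol (Leaf v) xa yb = v"
| "run_protocol (AliceNode m p0 p1) xa yb =
     (if m xa then run_protocol p1 xa yb else run_protocol p0 xa yb)"
| "run_protocol (BobNode m p0 p1) xa yb =
     (if m yb then run_protocol p1 xa yb else run_protocol p0 xa yb)"

fun protocol_cost :: "('x, 'y) protocol \<Rightarrow> nat" where
  "protocol_cost (Leaf v) = 0"
| "protocol_cost (AliceNode m p0 p1) = Suc (max (protocol_cost p0) (protocol_cost p1))"
| "protocol_cost (BobNode m p0 p1) = Suc (max (protocol_cost p0) (protocol_cost p1))"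

text \<open>A public-coin randomized protocol is a probability distribution over deterministic
  protocols (the public coins select the deterministic protocol).\<close>
type_synonym ('x, 'y) rand_protocol = "('x, 'y) protocol pmf"

definition rand_cost_le :: "('x, 'y) rand_protocol \<Rightarrow> real \<Rightarrow> bool" where
  "rand_cost_le R c \<longleftrightarrow> (\<forall>p \<in> set_pmf R. real (protocol_cost p) \<le> c)"

definition error_prob :: "('x, 'y) rand_protocol \<Rightarrow> 'x \<Rightarrow> 'y \<Rightarrow> bool \<Rightarrow> real" where
  "error_prob R xa yb v = measure_pmf.prob R {p. run_protocol p xa yb \<noteq> v}"

text \<open>Inputs in {0,1}^n are represented as x :: nat \<Rightarrow> bool (only x 0 .. x (n-1) matter).
  Degree-1 threshold function: f(x) = 1 iff sum a_i x_i \<le> b.\<close>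
definition threshold_fn :: "nat \<Rightarrow> (nat \<Rightarrow> int) \<Rightarrow> int \<Rightarrow> (nat \<Rightarrow> bool) \<Rightarrow> bool" where
  "threshold_fn n a b x \<longleftrightarrow> (\<Sum>i<n. a i * (if x i then 1 else 0)) \<le> b"

text \<open>The view of a player who sees exactly the variables in S.\<close>
definition view :: "nat set \<Rightarrow> (nat \<Rightarrow> bool) \<Rightarrow> (nat \<Rightarrow> bool)" where
  "view S x = (\<lambda>i. if i \<in> S then x i else False)"

end

theory Submission
  imports Defs
begin

text \<open>Alice's partial sum is to be compared with Bob's residual threshold. Replacing both by their
  ranks among the at most \<open>2^(n+1)\<close> values such sums can take (even ranks for Alice, odd ones
  for Bob) turns this into deciding \<open>i < j\<close> for distinct numbers of \<open>M = 2^k \<approx> n\<close> bits. For that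
  the players run a noisy binary search for the length of the common prefix of \<open>i\<close> and \<open>j\<close>
  over the dyadic intervals of \<open>{0..<2^k}\<close>: whether the prefixes of length \<open>l\<close> agree is tested
  by comparing \<open>6\<close>-bit random hashes, which errs with probability at most \<open>1/64\<close>, and the search
  backs up whenever the current interval looks inconsistent. A potential that rises with every
  reliable step and drops by at most one otherwise shows that \<open>3k\<close> steps find the prefix
  unless more than \<open>k\<close> of them are unreliable, which has probability at most
  \<open>(3k choose k+1) (3/64)^(k+1) \<le> 2^-k = O(1/n)\<close>; each step costs \<open>O(1)\<close> bits.\<close>

section \<open>Bad steps of a walk driven by independent coins\<close>

fun bad_steps :: "('c \<Rightarrow> 's \<Rightarrow> 's) \<Rightarrow> ('c \<Rightarrow> 's \<Rightarrow> bool) \<Rightarrow> 'c list \<Rightarrow> 's \<Rightarrow> nat" where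
  "bad_steps step bad [] s = 0"
| "bad_steps step bad (c # cs) s = (if bad c s then 1 else 0) + bad_steps step bad cs (step c s)"

lemma replicate_pmf_Suc_map: "replicate_pmf (Suc T) D = bind_pmf D (\<lambda>c. map_pmf (Cons c) (replicate_pmf T D))"
  by (simp add: map_pmf_def)

lemma bad_steps_tail_bound:
  assumes bad: "\<And>s. emeasure (measure_pmf D) {c. bad c s} \<le> ennreal q" and q: "0 \<le> q"
  shows "emeasure (measure_pmf (replicate_pmf T D)) {cs. m \<le> bad_steps step bad cs s}
           \<le> ennreal (real (T choose m) * q ^ m)"
proof (induction T arbitrary: s m)
  case 0
  then show ?case by (cases m) (auto simp: indicator_def)
next
  case (Suc T)
  show ?case
  proof (cases m)
    case 0
    then show ?thesis by (simp add: measure_pmf.emeasure_le_1)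
  next
    case (Suc m')
    let ?a = "ennreal (real (T choose m') * q ^ m')"
    let ?b = "ennreal (real (T choose m) * q ^ m)"
    let ?tail = "\<lambda>c. emeasure (measure_pmf (replicate_pmf T D)) {cs. m \<le> bad_steps step bad (c # cs) s}"
    have tail_le: "?tail c \<le> ?a * indicator {c. bad c s} c + ?b" for c
    proof (cases "bad c s")
      case True
      then have "?tail c = emeasure (measure_pmf (replicate_pmf T D)) {cs. m' \<le> bad_steps step bad cs (step c s)}"
        using Suc by simp
      also have "\<dots> \<le> ?a" using Suc.IH .
      finally show ?thesis using True by (simp add: add_increasing2)
    next
      case False
      then have "?tail c = emeasure (measure_pmf (replicate_pmf T D)) {cs. m \<le> bad_steps step bad cs (step c s)}"
        by simp
      also have "\<dots> \<le> ?b" using Suc.IH .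
      finally show ?thesis using False by simp
    qed
    have "emeasure (measure_pmf (replicate_pmf (Suc T) D)) {cs. m \<le> bad_steps step bad cs s}
       = (\<integral>\<^sup>+c. ?tail c \<partial>measure_pmf D)"
      unfolding replicate_pmf_Suc_map by (simp add: vimage_def)
    also have "\<dots> \<le> (\<integral>\<^sup>+c. (?a * indicator {c. bad c s} c + ?b) \<partial>measure_pmf D)"
      by (intro nn_integral_mono tail_le)
    also have "\<dots> = ?a * emeasure (measure_pmf D) {c. bad c s} + ?b"
      by (simp add: nn_integral_add nn_integral_cmult_indicator measure_pmf.emeasure_space_1)
    also have "\<dots> \<le> ?a * ennreal q + ?b"
      by (intro add_mono mult_left_mono bad) auto
    also have "\<dots> = ennreal (real (T choose m') * q ^ m' * q + real (T choose m) * q ^ m)"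
      using q by (simp add: ennreal_mult ennreal_plus)
    also have "\<dots> = ennreal (real (Suc T choose m) * q ^ m)"
      using Suc by (simp add: algebra_simps)
    finally show ?thesis .
  qed
qed

section \<open>Random hashing and equality tests\<close>

definition hash_pmf :: "'a set \<Rightarrow> nat \<Rightarrow> ('a \<Rightarrow> nat) pmf" where
  "hash_pmf D K = Pi_pmf D 0 (\<lambda>_. pmf_of_set {..<K})"

lemma hash_pmf_collision:
  assumes D: "finite D" "a \<in> D" and ab: "a \<noteq> b" and K: "K > 0"
  shows "emeasure (measure_pmf (hash_pmf D K)) {h. h a mod K = h b mod K} \<le> ennreal (1 / real K)"
proof -
  define D' where "D' = D - {a}"
  have DD: "D = insert a D'" "finite D'" "a \<notin> D'" using D by (auto simp: D'_def)
  let ?U = "pmf_of_set {..<K}" and ?F = "Pi_pmf D' 0 (\<lambda>_. pmf_of_set {..<K})"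
  have "hash_pmf D K = map_pmf (\<lambda>(y,f). f(a:=y)) (pair_pmf ?U ?F)"
    unfolding hash_pmf_def DD(1) by (rule Pi_pmf_insert[OF DD(2,3)])
  also have "\<dots> = map_pmf (\<lambda>(f,y). f(a:=y)) (pair_pmf ?F ?U)"
    by (subst pair_commute_pmf) (simp add: pmf.map_comp o_def case_prod_beta split_beta')
  finally have split: "hash_pmf D K = \<dots>" .
  have single: "emeasure (measure_pmf ?U) {y. y mod K = c} \<le> ennreal (1 / real K)" for c
  proof -
    have "emeasure (measure_pmf ?U) {y. y mod K = c} = ennreal (real (card ({..<K} \<inter> {y. y mod K = c})) / real K)"
      using K by (subst emeasure_pmf_of_set) auto
    also have "\<dots> \<le> ennreal (1 / real K)"
      by (intro ennreal_leI divide_right_mono) (auto simp: card_le_Suc0_iff_eq)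
    finally show ?thesis .
  qed
  have "emeasure (measure_pmf (hash_pmf D K)) {h. h a mod K = h b mod K}
      = emeasure (measure_pmf (pair_pmf ?F ?U)) {(f,y). y mod K = f b mod K}"
    unfolding split using ab
    by (simp add: vimage_def case_prod_beta) (intro arg_cong[where f="emeasure _"], auto)
  also have "\<dots> = (\<integral>\<^sup>+x. indicator {(f,y). y mod K = f b mod K} x \<partial>pair_pmf ?F ?U)"
    by simp
  also have "\<dots> = (\<integral>\<^sup>+f. \<integral>\<^sup>+y. indicator {(f,y). y mod K = f b mod K} (f,y) \<partial>?U \<partial>?F)"
    by (rule nn_integral_pair_pmf')
  also have "\<dots> = (\<integral>\<^sup>+f. emeasure (measure_pmf ?U) {y. y mod K = f b mod K} \<partial>?F)"
    by (intro nn_integral_cong) (auto intro!: nn_integral_cong simp: indicator_def simp flip: nn_integral_indicator)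
  also have "\<dots> \<le> (\<integral>\<^sup>+f. ennreal (1 / real K) \<partial>?F)"
    by (intro nn_integral_mono single)
  also have "\<dots> = ennreal (1 / real K)" by (simp add: measure_pmf.emeasure_space_1)
  finally show ?thesis .
qed

fun eq_test :: "nat \<Rightarrow> ('x \<Rightarrow> nat) \<Rightarrow> ('y \<Rightarrow> nat) \<Rightarrow> ('x,'y) protocol \<Rightarrow> ('x,'y) protocol \<Rightarrow> ('x,'y) protocol" where
  "eq_test 0 fa fb pe pn = pe"
| "eq_test (Suc s) fa fb pe pn =
     AliceNode (\<lambda>x. bit (fa x) s)
       (BobNode (\<lambda>y. bit (fb y) s) (eq_test s fa fb pe pn) pn)
       (BobNode (\<lambda>y. bit (fb y) s) pn (eq_test s fa fb pe pn))"

lemma run_eq_test: "run_protocol (eq_test s fa fb pe pn) x y =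
   (if fa x mod 2^s = fb y mod 2^s then run_protocol pe x y else run_protocol pn x y)"
proof -
  have low_bits: "(\<forall>t<s. bit (a::nat) t = bit b t) \<longleftrightarrow> a mod 2^s = b mod 2^s" for a b
  proof -
    have "a mod 2^s = b mod 2^s \<longleftrightarrow> (\<forall>t. bit (take_bit s a) t = bit (take_bit s b) t)"
      by (simp add: take_bit_eq_mod[symmetric] bit_eq_iff)
    then show ?thesis by (auto simp: bit_take_bit_iff)
  qed
  have "run_protocol (eq_test s fa fb pe pn) x y =
     (if (\<forall>t<s. bit (fa x) t = bit (fb y) t) then run_protocol pe x y else run_protocol pn x y)"
    by (induction s) (auto simp: less_Suc_eq)
  then show ?thesis by (simp add: low_bits)
qed

lemma protocol_cost_eq_test:
  "protocol_cost (eq_test s fa fb pe pn) \<le> 2 * s + max (protocol_cost pe) (protocol_cost pn)"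
  by (induction s) auto

section \<open>Noisy binary search\<close>

text \<open>Nodes of the binary search tree over \<open>{0..<2^k}\<close> are paths, most recent move first.
  Moving below depth \<open>k\<close> keeps the interval of a leaf: such extra moves only record
  repeated confirmations that the leaf is right.\<close>
fun dyadic_interval :: "nat \<Rightarrow> bool list \<Rightarrow> nat \<times> nat" where
  "dyadic_interval k [] = (0, 2^k)"
| "dyadic_interval k (d # p) = (if k \<le> length p then dyadic_interval k p else
     (let lo = fst (dyadic_interval k p); hi = snd (dyadic_interval k p); mid = (lo + hi) div 2 in
      if d then (mid, hi) else (lo, mid)))"

lemma dyadic_interval_length:
  "snd (dyadic_interval k p) = fst (dyadic_interval k p) + 2 ^ (k - min k (length p))"
proof (induction p)
  case Nil then show ?case by simp
next
  case (Cons d p)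
  show ?case
  proof (cases "k \<le> length p")
    case True then show ?thesis using Cons by simp
  next
    case False
    then obtain e where e: "k - length p = Suc e" by (metis Suc_diff_Suc not_le)
    then have e2: "k - min k (length (d#p)) = e" using False by simp
    have "(fst (dyadic_interval k p) + snd (dyadic_interval k p)) div 2 = fst (dyadic_interval k p) + 2^e"
      using Cons False e by simp
    then show ?thesis using Cons False e e2 by (auto simp: Let_def)
  qed
qed

lemma dyadic_interval_Cons_subset:
  "fst (dyadic_interval k p) \<le> fst (dyadic_interval k (d # p)) \<and> snd (dyadic_interval k (d # p)) \<le> snd (dyadic_interval k p)"
  using dyadic_interval_length[of k p] by (auto simp: Let_def)

lemma dyadic_interval_bounded: "fst (dyadic_interval k p) \<le> snd (dyadic_interval k p) \<and> snd (dyadic_interval k p) \<le> 2^k"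
proof (induction p)
  case Nil then show ?case by simp
next
  case (Cons d p)
  then show ?case using dyadic_interval_Cons_subset[of k p d] dyadic_interval_length[of k "d # p"] by linarith
qed

definition node_contains :: "nat \<Rightarrow> nat \<Rightarrow> bool list \<Rightarrow> bool" where
  "node_contains k ell p \<longleftrightarrow> fst (dyadic_interval k p) \<le> ell \<and> ell < snd (dyadic_interval k p)"

lemma node_contains_tl: "node_contains k ell (d # p) \<Longrightarrow> node_contains k ell p"
  using dyadic_interval_Cons_subset[of k p d] unfolding node_contains_def by linarith

lemma node_contains_root: "ell < 2^k \<Longrightarrow> node_contains k ell []"
  by (simp add: node_contains_def)

fun target_depth :: "nat \<Rightarrow> nat \<Rightarrow> bool list \<Rightarrow> nat" where
  "target_depth k ell [] = 0"
| "target_depth k ell (d # p) = (if node_contains k ell (d # p) then Suc (length p) else target_depth k ell p)"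

lemma target_depth_le: "target_depth k ell p \<le> length p"
  by (induction p) auto

lemma target_depth_contains: "node_contains k ell p \<Longrightarrow> target_depth k ell p = length p"
  by (cases p) auto

lemma node_contains_if_target_depth_ge:
  "ell < 2^k \<Longrightarrow> k \<le> target_depth k ell p \<Longrightarrow> node_contains k ell p"
proof (induction p)
  case Nil then show ?case by (simp add: node_contains_def)
next
  case (Cons d p)
  show ?case
  proof (cases "node_contains k ell (d # p)")
    case False
    then have "k \<le> target_depth k ell p" using Cons.prems by simp
    then have "node_contains k ell p" "k \<le> length p"
      using Cons.IH Cons.prems(1) target_depth_le[of k ell p] by auto
    then show ?thesis by (simp add: node_contains_def)
  qed simp
qed

text \<open>The depth of the deepest ancestor on the right track minus the distance below it.\<close>
definition progress :: "nat \<Rightarrow> nat \<Rightarrow> bool list \<Rightarrow> int" where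
  "progress k ell p = 2 * int (target_depth k ell p) - int (length p)"

text \<open>One step of the noisy binary search for \<open>ell\<close>, where \<open>t l\<close> is a noisy answer to \<open>l \<le> ell\<close>:
  back up if the current interval looks wrong, otherwise descend into the half that looks right.\<close>
definition search_step :: "nat \<Rightarrow> (nat \<Rightarrow> bool) \<Rightarrow> bool list \<Rightarrow> bool list" where
  "search_step k t p = (let lo = fst (dyadic_interval k p); hi = snd (dyadic_interval k p) in
     if \<not> t lo \<or> t hi then tl p
     else if k \<le> length p then True # p
     else if t ((lo + hi) div 2) then True # p else False # p)"

definition reliable_at :: "nat \<Rightarrow> nat \<Rightarrow> (nat \<Rightarrow> bool) \<Rightarrow> bool list \<Rightarrow> bool" where
  "reliable_at k ell t p \<longleftrightarrow> (let lo = fst (dyadic_interval k p); hi = snd (dyadic_interval k p) in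
     t lo = (lo \<le> ell) \<and> t hi = (hi \<le> ell) \<and>
     (length p < k \<longrightarrow> t ((lo + hi) div 2) = ((lo + hi) div 2 \<le> ell)))"

lemma progress_search_step_ge: "ell < 2^k \<Longrightarrow> progress k ell (search_step k t p) \<ge> progress k ell p - 1"
proof -
  assume ell: "ell < 2^k"
  have child: "progress k ell (d # p) \<ge> progress k ell p - 1" for d
    using target_depth_le[of k ell p] by (auto simp: progress_def)
  have parent: "progress k ell (tl p) \<ge> progress k ell p - 1"
  proof (cases p)
    case (Cons d q)
    then show ?thesis
      using node_contains_tl[of k ell d q] by (auto simp: progress_def target_depth_contains)
  qed simp
  show ?thesis using child parent by (auto simp: search_step_def Let_def)
qed

lemma progress_search_step_reliable:
  assumes ell: "ell < 2^k" and reliable: "reliable_at k ell t p"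
  shows "progress k ell (search_step k t p) \<ge> progress k ell p + 1"
proof -
  define lo where "lo = fst (dyadic_interval k p)"
  define hi where "hi = snd (dyadic_interval k p)"
  have len: "hi = lo + 2 ^ (k - min k (length p))"
    using dyadic_interval_length[of k p] by (simp add: lo_def hi_def)
  have t: "t lo = (lo \<le> ell)" "t hi = (hi \<le> ell)"
    "length p < k \<Longrightarrow> t ((lo + hi) div 2) = ((lo + hi) div 2 \<le> ell)"
    using reliable by (auto simp: reliable_at_def Let_def lo_def hi_def)
  show ?thesis
  proof (cases "node_contains k ell p")
    case True
    then have c: "lo \<le> ell" "ell < hi" by (auto simp: node_contains_def lo_def hi_def)
    then have descend: "\<not> (\<not> t lo \<or> t hi)" using t by auto
    have pc: "progress k ell p = int (length p)" using True by (simp add: progress_def target_depth_contains)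
    define d where "d = (k \<le> length p \<or> (lo + hi) div 2 \<le> ell)"
    have "search_step k t p = d # p"
      using descend t(3) by (auto simp: search_step_def Let_def lo_def hi_def d_def)
    moreover have "node_contains k ell (d # p)"
      using c True len by (auto simp: node_contains_def Let_def lo_def[symmetric] hi_def[symmetric] d_def)
    ultimately show ?thesis using pc by (simp add: progress_def)
  next
    case False
    then have "\<not> (lo \<le> ell \<and> ell < hi)" by (auto simp: node_contains_def lo_def hi_def)
    then have "search_step k t p = tl p" using t by (auto simp: search_step_def Let_def lo_def hi_def)
    moreover obtain d q where "p = d # q" using False node_contains_root[OF ell] by (cases p) auto
    ultimately show ?thesis using False by (simp add: progress_def)
  qed
qed

lemma progress_search_walk:
  assumes ell: "ell < 2^k"
  shows "progress k ell (fold (\<lambda>c. search_step k (t c)) cs p) \<ge>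
     progress k ell p + int (length cs)
       - 2 * int (bad_steps (\<lambda>c. search_step k (t c)) (\<lambda>c p. \<not> reliable_at k ell (t c) p) cs p)"
proof (induction cs arbitrary: p)
  case Nil then show ?case by simp
next
  case (Cons c cs)
  have "progress k ell (search_step k (t c) p) \<ge> progress k ell p + (if \<not> reliable_at k ell (t c) p then -1 else 1)"
    using progress_search_step_ge[OF ell] progress_search_step_reliable[OF ell] by auto
  then show ?case using Cons.IH[of "search_step k (t c) p"] by auto
qed

lemma progress_ge_imp_found:
  assumes "int k \<le> progress k ell p" "ell < 2^k"
  shows "k \<le> length p" "fst (dyadic_interval k p) = ell"
proof -
  have "k \<le> target_depth k ell p" using assms target_depth_le[of k ell p] by (simp add: progress_def)
  then have "node_contains k ell p" "k \<le> length p"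
    using node_contains_if_target_depth_ge[OF assms(2)] target_depth_le[of k ell p] by auto
  then show "k \<le> length p" "fst (dyadic_interval k p) = ell"
    using dyadic_interval_length[of k p] by (auto simp: node_contains_def)
qed

section \<open>Common prefixes\<close>

definition bit_prefix :: "nat \<Rightarrow> nat \<Rightarrow> nat \<Rightarrow> nat" where
  "bit_prefix M l z = z div 2 ^ (M - l)"

lemma bit_prefix_prefix: "l \<le> l' \<Longrightarrow> l' \<le> M \<Longrightarrow> bit_prefix M l z = bit_prefix M l' z div 2 ^ (l' - l)"
proof -
  assume "l \<le> l'" "l' \<le> M"
  then have "M - l = (M - l') + (l' - l)" by simp
  then show ?thesis by (simp add: bit_prefix_def power_add div_mult2_eq)
qed

lemma bit_prefix_less: "z < 2^M \<Longrightarrow> bit_prefix M l z < 2^M"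
  unfolding bit_prefix_def by (meson div_le_dividend le_less_trans)

definition common_prefix :: "nat \<Rightarrow> nat \<Rightarrow> nat \<Rightarrow> nat" where
  "common_prefix M i j = (GREATEST l. l \<le> M \<and> bit_prefix M l i = bit_prefix M l j)"

lemma
  assumes "i \<noteq> j" "i < 2^M" "j < 2^M"
  shows common_prefix_less: "common_prefix M i j < M"
    and bit_prefix_eq_iff: "l \<le> M \<Longrightarrow> bit_prefix M l i = bit_prefix M l j \<longleftrightarrow> l \<le> common_prefix M i j"
proof -
  let ?P = "\<lambda>l. l \<le> M \<and> bit_prefix M l i = bit_prefix M l j"
  have P: "?P (common_prefix M i j)" unfolding common_prefix_def
    by (rule GreatestI_nat[where k=0 and b=M]) (simp_all add: bit_prefix_def assms(2,3) div_less)
  have greatest: "?P l \<Longrightarrow> l \<le> common_prefix M i j" for l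
    unfolding common_prefix_def by (rule Greatest_le_nat) auto
  have "common_prefix M i j \<noteq> M" using P assms by (auto simp: bit_prefix_def)
  then show "common_prefix M i j < M" using P by simp
  show "bit_prefix M l i = bit_prefix M l j \<longleftrightarrow> l \<le> common_prefix M i j" if "l \<le> M"
  proof
    assume "bit_prefix M l i = bit_prefix M l j"
    then show "l \<le> common_prefix M i j" using greatest that by simp
  next
    assume "l \<le> common_prefix M i j"
    then show "bit_prefix M l i = bit_prefix M l j"
      using P bit_prefix_prefix[of l "common_prefix M i j" M] by simp
  qed
qed

text \<open>The first differing bit decides the comparison, and it is \<open>0\<close> in the smaller number.\<close>
lemma even_bit_prefix_first_difference:
  assumes ij: "i \<noteq> j" "i < 2^M" "j < 2^M"
  shows "even (bit_prefix M (Suc (common_prefix M i j)) i) \<longleftrightarrow> i < j"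
proof -
  define e where "e = common_prefix M i j"
  define A where "A = bit_prefix M (Suc e) i"
  define B where "B = bit_prefix M (Suc e) j"
  have e: "e < M" using common_prefix_less[OF ij] by (simp add: e_def)
  have "A \<noteq> B" using bit_prefix_eq_iff[OF ij, of "Suc e"] e by (simp add: A_def B_def e_def)
  moreover have "A div 2 = B div 2"
    using bit_prefix_eq_iff[OF ij, of e] bit_prefix_prefix[of e "Suc e" M] e
    by (simp add: A_def B_def e_def)
  ultimately have "even A \<longleftrightarrow> A < B" by presburger
  moreover have "A < B \<longleftrightarrow> i < j"
    using div_le_mono[of i j "2 ^ (M - Suc e)"] div_le_mono[of j i "2 ^ (M - Suc e)"] \<open>A \<noteq> B\<close>
    unfolding A_def B_def bit_prefix_def by (metis le_less not_le)
  ultimately show ?thesis by (simp add: A_def e_def)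
qed

section \<open>A protocol for greater-than\<close>

text \<open>The oracle of the search asks whether the \<open>l\<close>-bit prefixes of \<open>i\<close> and \<open>j\<close> have equal
  \<open>r\<close>-bit hashes; it errs only on a hash collision.\<close>
definition prefix_oracle :: "nat \<Rightarrow> nat \<Rightarrow> nat \<Rightarrow> nat \<Rightarrow> (nat \<Rightarrow> nat) \<Rightarrow> nat \<Rightarrow> bool" where
  "prefix_oracle r M i j h l \<longleftrightarrow> h (bit_prefix M l i) mod 2^r = h (bit_prefix M l j) mod 2^r"

text \<open>After the search, Alice announces the bit following the common prefix that was found.\<close>
definition search_output :: "nat \<Rightarrow> nat \<Rightarrow> nat \<Rightarrow> bool list \<Rightarrow> bool" where
  "search_output M k i p \<longleftrightarrow> k \<le> length p \<and> even (bit_prefix M (Suc (fst (dyadic_interval k p))) i)"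

fun gt_tree :: "nat \<Rightarrow> nat \<Rightarrow> nat \<Rightarrow> ('x \<Rightarrow> nat) \<Rightarrow> ('y \<Rightarrow> nat) \<Rightarrow> (nat \<Rightarrow> nat) list \<Rightarrow> bool list \<Rightarrow> ('x,'y) protocol" where
  "gt_tree r M k iA jB [] p = (if k \<le> length p then
      AliceNode (\<lambda>x. even (bit_prefix M (Suc (fst (dyadic_interval k p))) (iA x))) (Leaf False) (Leaf True)
    else Leaf False)"
| "gt_tree r M k iA jB (h # hs) p =
    (let lo = fst (dyadic_interval k p); hi = snd (dyadic_interval k p);
         E = (\<lambda>l. eq_test r (\<lambda>x. h (bit_prefix M l (iA x))) (\<lambda>y. h (bit_prefix M l (jB y))));
         up = gt_tree r M k iA jB hs (tl p)
     in E lo (E hi up (if k \<le> length p then gt_tree r M k iA jB hs (True # p)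
                       else E ((lo + hi) div 2) (gt_tree r M k iA jB hs (True # p)) (gt_tree r M k iA jB hs (False # p))))
          up)"

lemma run_gt_tree: "run_protocol (gt_tree r M k iA jB hs p) x y =
   search_output M k (iA x) (fold (\<lambda>h. search_step k (prefix_oracle r M (iA x) (jB y) h)) hs p)"
proof (induction hs arbitrary: p)
  case Nil then show ?case by (simp add: search_output_def)
next
  case (Cons h hs)
  show ?case
    by (cases "k \<le> length p") (simp_all add: Let_def run_eq_test Cons.IH search_step_def prefix_oracle_def)
qed

lemma protocol_cost_gt_tree: "protocol_cost (gt_tree r M k iA jB hs p) \<le> 6 * r * length hs + 1"
proof (induction hs arbitrary: p)
  case Nil then show ?case by simp
next
  case (Cons h hs)
  define B where "B = 6 * r * length hs + 1"
  have IH: "protocol_cost (gt_tree r M k iA jB hs q) \<le> b" if "B \<le> b" for q b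
    using Cons.IH[of q] that by (simp add: B_def)
  have E: "protocol_cost (eq_test r fa fb pe pn) \<le> 2 * r + b"
    if "protocol_cost pe \<le> b" "protocol_cost pn \<le> b" for fa fb pe pn b
    using protocol_cost_eq_test[of r fa fb pe pn] that by linarith
  have descend: "protocol_cost (if k \<le> length p then gt_tree r M k iA jB hs (True # p)
      else eq_test r fa fb (gt_tree r M k iA jB hs (True # p)) (gt_tree r M k iA jB hs (False # p))) \<le> 2 * r + B"
    for fa fb using IH[of B] by (auto intro: IH E)
  have "protocol_cost (gt_tree r M k iA jB (h # hs) p) \<le> 2 * r + (2 * r + (2 * r + B))"
    unfolding gt_tree.simps Let_def by (intro E IH descend) simp_all
  then show ?case by (simp add: B_def)
qed

definition prefix_collision :: "nat \<Rightarrow> nat \<Rightarrow> nat \<Rightarrow> nat \<Rightarrow> nat \<Rightarrow> (nat \<Rightarrow> nat) set" where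
  "prefix_collision r M i j l = {h. bit_prefix M l i \<noteq> bit_prefix M l j \<and> prefix_oracle r M i j h l}"

lemma prefix_oracle_exact:
  assumes "i \<noteq> j" "i < 2^M" "j < 2^M" "l \<le> M" "h \<notin> prefix_collision r M i j l"
  shows "prefix_oracle r M i j h l \<longleftrightarrow> l \<le> common_prefix M i j"
  using assms bit_prefix_eq_iff[OF assms(1-3) assms(4)]
  unfolding prefix_collision_def prefix_oracle_def by auto

lemma prefix_collision_prob:
  assumes "i < 2^M" "j < 2^M"
  shows "emeasure (measure_pmf (hash_pmf {..<2^M} (2^r))) (prefix_collision r M i j l) \<le> ennreal (1 / 2^r)"
proof (cases "bit_prefix M l i = bit_prefix M l j")
  case True then show ?thesis by (simp add: prefix_collision_def)
next
  case False
  have "emeasure (measure_pmf (hash_pmf {..<2^M} (2^r))) (prefix_collision r M i j l)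
     = emeasure (measure_pmf (hash_pmf {..<2^M} (2^r)))
         {h. h (bit_prefix M l i) mod 2^r = h (bit_prefix M l j) mod 2^r}"
    using False by (simp add: prefix_collision_def prefix_oracle_def)
  also have "\<dots> \<le> ennreal (1 / real (2^r))"
    by (rule hash_pmf_collision) (use False bit_prefix_less[OF assms(1)] in auto)
  finally show ?thesis by simp
qed

text \<open>The oracle is queried at three points per step, hence three chances of a collision.\<close>
lemma unreliable_prob:
  assumes ij: "i \<noteq> j" "i < 2^(2^k)" "j < 2^(2^k)"
  shows "emeasure (measure_pmf (hash_pmf {..<2^(2^k)} (2^r)))
     {h. \<not> reliable_at k (common_prefix (2^k) i j) (prefix_oracle r (2^k) i j h) p} \<le> ennreal (3 / 2^r)"
proof -
  define M where "M = (2::nat)^k"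
  define lo where "lo = fst (dyadic_interval k p)"
  define hi where "hi = snd (dyadic_interval k p)"
  define mid where "mid = (lo + hi) div 2"
  let ?H = "measure_pmf (hash_pmf {..<2^M} (2^r))"
  let ?C = "prefix_collision r M i j"
  have b: "lo \<le> M" "hi \<le> M" "mid \<le> M"
    using dyadic_interval_bounded[of k p] by (auto simp: lo_def hi_def mid_def M_def)
  have ij': "i \<noteq> j" "i < 2^M" "j < 2^M" using ij by (auto simp: M_def)
  have "{h. \<not> reliable_at k (common_prefix M i j) (prefix_oracle r M i j h) p} \<subseteq> ?C lo \<union> ?C hi \<union> ?C mid"
    using prefix_oracle_exact[OF ij' b(1)] prefix_oracle_exact[OF ij' b(2)] prefix_oracle_exact[OF ij' b(3)]
    by (auto simp: reliable_at_def Let_def lo_def[symmetric] hi_def[symmetric] mid_def[symmetric])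
  then have "emeasure ?H {h. \<not> reliable_at k (common_prefix M i j) (prefix_oracle r M i j h) p}
      \<le> emeasure ?H (?C lo \<union> ?C hi \<union> ?C mid)"
    by (rule emeasure_mono) simp
  also have "\<dots> \<le> emeasure ?H (?C lo) + emeasure ?H (?C hi) + emeasure ?H (?C mid)"
    by (intro order_trans[OF emeasure_subadditive] add_mono emeasure_subadditive) auto
  also have "\<dots> \<le> ennreal (1/2^r) + ennreal (1/2^r) + ennreal (1/2^r)"
    by (intro add_mono prefix_collision_prob ij')
  also have "\<dots> = ennreal (3 / 2^r)"
    by (simp flip: ennreal_plus)
  finally show ?thesis by (simp add: M_def)
qed

text \<open>Each reliable step raises the potential by one and each unreliable one lowers it by at
  most one, so with few unreliable steps the search ends on the leaf of the common prefix.\<close>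
lemma gt_tree_correct:
  assumes ij: "iA x \<noteq> jB y" "iA x < 2^(2^k)" "jB y < 2^(2^k)"
    and few: "k + 2 * bad_steps (\<lambda>h. search_step k (prefix_oracle r (2^k) (iA x) (jB y) h))
        (\<lambda>h p. \<not> reliable_at k (common_prefix (2^k) (iA x) (jB y)) (prefix_oracle r (2^k) (iA x) (jB y) h) p) hs []
      \<le> length hs"
  shows "run_protocol (gt_tree r (2^k) k iA jB hs []) x y \<longleftrightarrow> iA x < jB y"
proof -
  define ell where "ell = common_prefix (2^k) (iA x) (jB y)"
  define q where "q = fold (\<lambda>h. search_step k (prefix_oracle r (2^k) (iA x) (jB y) h)) hs []"
  have ell: "ell < 2^k" using common_prefix_less[OF ij] by (simp add: ell_def)
  have "progress k ell q \<ge> int (length hs)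
      - 2 * int (bad_steps (\<lambda>h. search_step k (prefix_oracle r (2^k) (iA x) (jB y) h))
          (\<lambda>h p. \<not> reliable_at k ell (prefix_oracle r (2^k) (iA x) (jB y) h) p) hs [])"
    using progress_search_walk[OF ell, where t="prefix_oracle r (2^k) (iA x) (jB y)" and cs=hs and p="[]"]
    by (simp add: q_def progress_def)
  then have "int k \<le> progress k ell q" using few by (simp add: ell_def)
  then have "k \<le> length q" "fst (dyadic_interval k q) = ell"
    using progress_ge_imp_found[OF _ ell] by auto
  then show ?thesis
    using even_bit_prefix_first_difference[OF ij]
    by (simp add: run_gt_tree search_output_def q_def ell_def)
qed

lemma binomial_error_bound: "real ((3*k) choose (Suc k)) * (3/2^6) ^ Suc k \<le> 1 / 2^k"
proof -
  have "real ((3*k) choose (Suc k)) \<le> 2^(3*k)"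
    using binomial_le_pow2[of "3*k" "Suc k"] by (metis of_nat_le_iff of_nat_numeral of_nat_power)
  also have "(2::real)^(3*k) = 8^k" by (simp add: power_mult)
  finally have c: "real ((3*k) choose (Suc k)) \<le> 8^k" .
  have "(3/2^6::real) ^ Suc k \<le> (3/2^6) ^ k" by (rule power_decreasing) auto
  also have "\<dots> \<le> (1/16)^k" by (rule power_mono) auto
  finally have "real ((3*k) choose (Suc k)) * (3/2^6) ^ Suc k \<le> 8^k * (1/16)^k"
    by (rule mult_mono[OF c]) auto
  also have "\<dots> = (1/2)^k" by (simp flip: power_mult_distrib)
  also have "\<dots> = 1 / 2^k" by (simp add: power_divide)
  finally show ?thesis .
qed

definition gt_protocol :: "nat \<Rightarrow> ('x \<Rightarrow> nat) \<Rightarrow> ('y \<Rightarrow> nat) \<Rightarrow> ('x, 'y) rand_protocol" where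
  "gt_protocol k iA jB =
     map_pmf (\<lambda>hs. gt_tree 6 (2^k) k iA jB hs []) (replicate_pmf (3*k) (hash_pmf {..<2^(2^k)} (2^6)))"

lemma rand_cost_le_gt_protocol: "rand_cost_le (gt_protocol k iA jB) (real (108 * k + 1))"
proof -
  have "protocol_cost (gt_tree 6 (2^k) k iA jB hs []) \<le> 108 * k + 1" if "length hs = 3 * k" for hs
    using protocol_cost_gt_tree[of 6 "2^k" k iA jB hs "[]"] that by simp
  then have "\<forall>p\<in>set_pmf (gt_protocol k iA jB). protocol_cost p \<le> 108 * k + 1"
    by (auto simp: gt_protocol_def set_replicate_pmf)
  then show ?thesis unfolding rand_cost_le_def by (simp only: of_nat_le_iff)
qed

lemma error_prob_gt_protocol:
  assumes ij: "iA x \<noteq> jB y" "iA x < 2^(2^k)" "jB y < 2^(2^k)"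
  shows "error_prob (gt_protocol k iA jB) x y (iA x < jB y) \<le> 1 / 2^k"
proof -
  let ?D = "hash_pmf {..<2^(2^k)} (2^6)"
  let ?step = "\<lambda>h. search_step k (prefix_oracle 6 (2^k) (iA x) (jB y) h)"
  let ?bad = "\<lambda>h p. \<not> reliable_at k (common_prefix (2^k) (iA x) (jB y)) (prefix_oracle 6 (2^k) (iA x) (jB y) h) p"
  let ?wrong = "{hs. run_protocol (gt_tree 6 (2^k) k iA jB hs []) x y \<noteq> (iA x < jB y)}"
  have "AE hs in measure_pmf (replicate_pmf (3*k) ?D). hs \<in> ?wrong \<longrightarrow> hs \<in> {hs. Suc k \<le> bad_steps ?step ?bad hs []}"
    using gt_tree_correct[where iA=iA and jB=jB and x=x and y=y and k=k and r=6, OF ij] by (intro AE_pmfI) (force simp: set_replicate_pmf)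
  then have "emeasure (measure_pmf (replicate_pmf (3*k) ?D)) ?wrong
      \<le> emeasure (measure_pmf (replicate_pmf (3*k) ?D)) {hs. Suc k \<le> bad_steps ?step ?bad hs []}"
    by (rule emeasure_mono_AE) simp
  also have "\<dots> \<le> ennreal (real ((3*k) choose (Suc k)) * (3/2^6) ^ Suc k)"
    by (rule bad_steps_tail_bound) (use unreliable_prob[OF ij, where r=6] in simp_all)
  also have "\<dots> \<le> ennreal (1 / 2^k)" by (intro ennreal_leI binomial_error_bound)
  finally show ?thesis
    by (simp add: error_prob_def gt_protocol_def vimage_def measure_pmf.emeasure_eq_measure)
qed

section \<open>Threshold functions\<close>

definition set_rank :: "'a::linorder set \<Rightarrow> 'a \<Rightarrow> nat" where
  "set_rank W z = card {w \<in> W. w < z}"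

lemma set_rank_strict_mono: "finite W \<Longrightarrow> z \<in> W \<Longrightarrow> z < z' \<Longrightarrow> set_rank W z < set_rank W z'"
  unfolding set_rank_def by (rule psubset_card_mono) (auto intro: less_trans)

lemma set_rank_less_card: "finite W \<Longrightarrow> z \<in> W \<Longrightarrow> set_rank W z < card W"
  unfolding set_rank_def by (intro psubset_card_mono) auto

text \<open>Even numbers for Alice's values and odd ones for Bob's make the ranks distinct while
  preserving the non-strict order.\<close>
lemma interleaved_set_rank_less_iff:
  assumes "finite W" "z \<in> W" "z' \<in> W"
  shows "2 * set_rank W z < 2 * set_rank W z' + 1 \<longleftrightarrow> z \<le> z'"
proof (cases "z \<le> z'")
  case True
  then have "set_rank W z \<le> set_rank W z'"
    using set_rank_strict_mono[OF assms(1,2), of z'] by (cases "z = z'") (auto simp: order_le_less)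
  then show ?thesis using True by simp
next
  case False
  then have "set_rank W z' < set_rank W z" using set_rank_strict_mono[OF assms(1,3), of z] by simp
  then show ?thesis using False by simp
qed

definition subset_sums :: "(nat \<Rightarrow> int) \<Rightarrow> nat set \<Rightarrow> int set" where
  "subset_sums a P = (\<lambda>S. \<Sum>i\<in>S. a i) ` Pow P"

lemma sum_in_subset_sums:
  "finite P \<Longrightarrow> (\<Sum>i\<in>P. a i * (if x i then 1 else 0)) \<in> subset_sums a P"
proof -
  assume "finite P"
  then have "(\<Sum>i\<in>P. a i * (if x i then 1 else 0)) = (\<Sum>i\<in>{i\<in>P. x i}. a i)"
    by (simp add: sum.inter_filter if_distrib cong: if_cong)
  then show ?thesis unfolding subset_sums_def by auto
qed

lemma card_subset_sums: "finite P \<Longrightarrow> card (subset_sums a P) \<le> 2 ^ card P"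
  unfolding subset_sums_def by (metis card_Pow card_image_le finite_Pow_iff)

lemma threshold_fn_split:
  assumes "P1 \<inter> P2 = {}" "P1 \<union> P2 = {..<n}"
  shows "threshold_fn n a b x \<longleftrightarrow>
    (\<Sum>i\<in>P1. a i * (if view P1 x i then 1 else 0)) \<le> b - (\<Sum>i\<in>P2. a i * (if view P2 x i then 1 else 0))"
proof -
  have "finite P1" "finite P2" using assms(2) by (metis finite_Un finite_lessThan)+
  then have "(\<Sum>i<n. a i * (if x i then 1 else 0))
      = (\<Sum>i\<in>P1. a i * (if x i then 1 else 0)) + (\<Sum>i\<in>P2. a i * (if x i then 1 else 0))"
    using sum.union_disjoint[of P1 P2] assms by simp
  moreover have "(\<Sum>i\<in>P. a i * (if view P x i then 1 else 0)) = (\<Sum>i\<in>P. a i * (if x i then 1 else 0))" for P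
    unfolding view_def by (intro sum.cong) auto
  ultimately show ?thesis unfolding threshold_fn_def by (simp only:) linarith
qed

lemma threshold_fn_as_comparison:
  assumes "P1 \<inter> P2 = {}" "P1 \<union> P2 = {..<n}"
  obtains iA jB :: "(nat \<Rightarrow> bool) \<Rightarrow> nat" where
    "\<And>x. iA (view P1 x) \<noteq> jB (view P2 x)"
    "\<And>x. iA (view P1 x) < 2^(n+2)" "\<And>x. jB (view P2 x) < 2^(n+2)"
    "\<And>x. threshold_fn n a b x \<longleftrightarrow> iA (view P1 x) < jB (view P2 x)"
proof
  have fin: "finite P1" "finite P2" using assms(2) by (metis finite_Un finite_lessThan)+
  define sA where "sA = (\<lambda>xa::nat\<Rightarrow>bool. \<Sum>i\<in>P1. a i * (if xa i then 1 else 0))"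
  define tB where "tB = (\<lambda>yb::nat\<Rightarrow>bool. b - (\<Sum>i\<in>P2. a i * (if yb i then 1 else 0)))"
  define W where "W = subset_sums a P1 \<union> (\<lambda>s. b - s) ` subset_sums a P2"
  have finW: "finite W" using fin by (simp add: W_def subset_sums_def)
  have sAW: "sA xa \<in> W" and tBW: "tB yb \<in> W" for xa yb
    using sum_in_subset_sums[OF fin(1)] sum_in_subset_sums[OF fin(2)] by (auto simp: W_def sA_def tB_def)
  have "card W \<le> card (subset_sums a P1) + card ((\<lambda>s. b - s) ` subset_sums a P2)"
    unfolding W_def by (rule card_Un_le)
  also have "\<dots> \<le> 2 ^ card P1 + 2 ^ card P2"
    using card_image_le[of "subset_sums a P2" "\<lambda>s. b - s"] card_subset_sums[OF fin(1), of a]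
      card_subset_sums[OF fin(2), of a] fin(2)
    by (simp add: subset_sums_def)
  also have "\<dots> \<le> 2 ^ n + 2 ^ n"
    using card_mono[OF finite_lessThan, of P1 n] card_mono[OF finite_lessThan, of P2 n] assms(2)
    by (intro add_mono power_increasing) auto
  finally have cardW: "2 * card W \<le> 2 ^ (n + 2)" by simp
  define iA where "iA = (\<lambda>xa. 2 * set_rank W (sA xa))"
  define jB where "jB = (\<lambda>yb. 2 * set_rank W (tB yb) + 1)"
  show "iA (view P1 x) \<noteq> jB (view P2 x)" for x unfolding iA_def jB_def by presburger
  show "iA (view P1 x) < 2^(n+2)" for x
    using set_rank_less_card[OF finW sAW, of "view P1 x"] cardW unfolding iA_def by linarith
  show "jB (view P2 x) < 2^(n+2)" for x
    using set_rank_less_card[OF finW tBW, of "view P2 x"] cardW unfolding jB_def by linarith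
  show "threshold_fn n a b x \<longleftrightarrow> iA (view P1 x) < jB (view P2 x)" for x
    using threshold_fn_split[OF assms] interleaved_set_rank_less_iff[OF finW sAW tBW]
    by (simp add: iA_def jB_def sA_def tB_def)
qed

lemma rand_cost_le_mono: "rand_cost_le R c \<Longrightarrow> c \<le> c' \<Longrightarrow> rand_cost_le R c'"
  unfolding rand_cost_le_def by force

lemma threshold_fn_protocol:
  assumes n: "n \<ge> 2" and partition: "P1 \<inter> P2 = {}" "P1 \<union> P2 = {..<n}"
  shows "\<exists>R :: (nat \<Rightarrow> bool, nat \<Rightarrow> bool) rand_protocol.
          rand_cost_le R (325 * log 2 (real n)) \<and>
          (\<forall>x. error_prob R (view P1 x) (view P2 x) (threshold_fn n a b x) \<le> 1 / real n)"
proof -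
  obtain iA jB :: "(nat \<Rightarrow> bool) \<Rightarrow> nat" where ij:
    "\<And>x. iA (view P1 x) \<noteq> jB (view P2 x)"
    "\<And>x. iA (view P1 x) < 2^(n+2)" "\<And>x. jB (view P2 x) < 2^(n+2)"
    and threshold: "\<And>x. threshold_fn n a b x \<longleftrightarrow> iA (view P1 x) < jB (view P2 x)"
    using threshold_fn_as_comparison[OF partition] by metis
  obtain m where m: "2^m \<le> n" "n < 2^(m+1)" using ex_power_ivl1[of 2 n] n by auto
  have "m \<ge> 1" using m n by (cases m) auto
  define k where "k = m + 2"
  have "n + 2 \<le> 2^k" using m by (simp add: k_def)
  then have bits: "(2::nat)^(n+2) \<le> 2^(2^k)" by (intro power_increasing) simp_all
  have "real n \<le> real (2^k)" using \<open>n + 2 \<le> 2^k\<close> by (simp only: of_nat_le_iff)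
  then have "real n \<le> 2^k" by simp
  show ?thesis
  proof (intro exI conjI allI)
    have "real (108 * k + 1) \<le> 325 * log 2 (real n)"
      using le_log2_of_power[OF m(1)] \<open>m \<ge> 1\<close> by (simp add: k_def)
    then show "rand_cost_le (gt_protocol k iA jB) (325 * log 2 (real n))"
      by (rule rand_cost_le_mono[OF rand_cost_le_gt_protocol])
  next
    fix x
    have "error_prob (gt_protocol k iA jB) (view P1 x) (view P2 x) (threshold_fn n a b x) \<le> 1 / 2^k"
      unfolding threshold using bits ij[of x]
      by (intro error_prob_gt_protocol[where iA=iA and jB=jB]) (auto intro: less_le_trans)
    also have "(1::real) / 2^k \<le> 1 / real n" using \<open>real n \<le> 2^k\<close> n by (simp add: frac_le)
    finally show "error_prob (gt_protocol k iA jB) (view P1 x) (view P2 x) (threshold_fn n a b x) \<le> 1 / real n" .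
  qed
qed

theorem lemma4:
  shows "\<exists>C1 C2 :: real. C1 > 0 \<and> C2 > 0 \<and>
    (\<forall>(n::nat) (a::nat \<Rightarrow> int) (b::int) (P1::nat set) (P2::nat set).
       n \<ge> 1 \<longrightarrow> P1 \<inter> P2 = {} \<longrightarrow> P1 \<union> P2 = {..<n} \<longrightarrow>
       (\<exists>R :: (nat \<Rightarrow> bool, nat \<Rightarrow> bool) rand_protocol.
          rand_cost_le R (C2 * log 2 (real n)) \<and>
          (\<forall>x :: nat \<Rightarrow> bool.
             error_prob R (view P1 x) (view P2 x) (threshold_fn n a b x) \<le> C1 / real n)))"
proof (rule exI[where x=1], rule exI[where x=325], intro conjI allI impI)
  fix n :: nat and a :: "nat \<Rightarrow> int" and b :: int and P1 P2 :: "nat set"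
  assume "n \<ge> 1" "P1 \<inter> P2 = {}" "P1 \<union> P2 = {..<n}"
  show "\<exists>R :: (nat \<Rightarrow> bool, nat \<Rightarrow> bool) rand_protocol.
          rand_cost_le R (325 * log 2 (real n)) \<and>
          (\<forall>x. error_prob R (view P1 x) (view P2 x) (threshold_fn n a b x) \<le> 1 / real n)"
  proof (cases "n = 1")
    case True
    \<comment> \<open>error bound \<open>1\<close> and cost bound \<open>0\<close>: any constant protocol will do\<close>
    then show ?thesis
      by (intro exI[where x="return_pmf (Leaf True)"])
        (simp add: rand_cost_le_def error_prob_def measure_pmf.prob_le_1)
  next
    case False
    then show ?thesis using threshold_fn_protocol \<open>n \<ge> 1\<close> \<open>P1 \<inter> P2 = {}\<close> \<open>P1 \<union> P2 = {..<n}\<close> by simp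
  qed
qed simp_all

end
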